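(* Let $(E,C)$ be a separated graph with $E^0$ and $E^1$ countable, let $S\subseteq C_{fin}$ and let $K$ be a field. Then there exist an interval (possibly unbounded) $\mathfrak{X}\subseteq\mathbb{R}$ and an $(E,C,S)$-algebraic branching system $(\mathfrak{X},\{R_e\}_{e\in E^1},\{D_v\}_{v\in E^0},\{f_e\}_{e\in E^1})$ satisfying, for every non-sink $v$: (i) $R_e\cap R_f\neq\emptyset$ for $e\in X$, $f\in Y$, $X,Y\in C_v$, $X\neq Y$; (ii) $\bigcup_{e\in X}R_e\subsetneq D_v$ for each $X\in C_v\setminus S$; (iii) $\bigcup_{e\in X}R_e\neq\bigcup_{f\in Y}R_f$ for $X,Y\in C_v\setminus S$, $X\neq Y$; together with a $K$-algebra homomorphism $\pi:L_K(E,C,S)\to \mathrm{Hom}_K(M)$, where $M$ is the $K$-module of all functions $\mathfrak{X}\to K$, such that for all $\phi\in M$, $v\in E^0$, $e\in E^1$: $$\pi(v)(\phi)=\chi_{D_v}\cdot\phi,\qquad \pi(e)(\phi)=\chi_{R_e}\cdot \phi\circ f_e^{-1},\qquad \pi(e^* )(\phi)=\chi_{D_{r(e)}}\cdot\phi\circ f_e.$$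
   Context: A separated graph is a pair $(E,C)$ where $E=(E^0,E^1,r,s)$ is a directed graph and $C=\bigcup_{v\in E^0}C_v$, where for each non-sink $v$, $C_v$ is a partition of $s^{-1}(v)$ into pairwise disjoint nonempty sets; $C_{fin}$ is the set of finite $Y\in C$. For $S\subseteq C_{fin}$ and a field $K$, the Cohn-Leavitt algebra $L_K(E,C,S)$ is the universal $K$-algebra generated by pairwise orthogonal idempotents $\{v:v\in E^0\}$ and elements $\{e,e^*:e\in E^1\}$ subject to: $s(e)e=er(e)=e$; $r(e)e^*=e^*s(e)=e^*$; $e^*f=\delta_{e,f}r(e)$ for $e,f\in Y$, $Y\in C$; $v=\sum_{e\in X}ee^*$ for every $X\in S\cap C_v$, $v$ non-sink. An $(E,C,S)$-algebraic branching system is a set $\mathfrak{X}$ with subsets $\{R_e\}_{e\in E^1}$, $\{D_v\}_{v\in E^0}$ and maps $f_e$ such that: $R_e\cap R_d=\emptyset$ for distinct $d,e$ in a common $Y\in C$; the $D_v$ are pairwise disjoint; $R_e\subseteq D_{s(e)}$; $D_v=\bigcup_{e\in Y}R_e$ whenever $Y\in S\cap C_v$; each $f_e:D_{r(e)}\to R_e$ is a bijection. Notation: $\chi_{R_e}\cdot\phi\circ f_e^{-1}$ denotes the function equal to $\phi(f_e^{-1}(x))$ for $x\in R_e$ and $0$ otherwise; $\chi_{D_{r(e)}}\cdot\phi\circ f_e$ denotes the function equal to $\phi(f_e(x))$ for $x\in D_{r(e)}$ and $0$ otherwise; $\chi_{D_v}$ is the characteristic function of $D_v$. *)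

theory Defs
  imports "HOL-Analysis.Analysis"
begin

definition nonsink :: "'v set \<Rightarrow> 'e set \<Rightarrow> ('e \<Rightarrow> 'v) \<Rightarrow> 'v \<Rightarrow> bool" where
  "nonsink E0 E1 s v \<longleftrightarrow> v \<in> E0 \<and> (\<exists>e\<in>E1. s e = v)"

definition separated_graph ::
  "'v set \<Rightarrow> 'e set \<Rightarrow> ('e \<Rightarrow> 'v) \<Rightarrow> ('e \<Rightarrow> 'v) \<Rightarrow> ('v \<Rightarrow> 'e set set) \<Rightarrow> bool" where
  "separated_graph E0 E1 r s C \<longleftrightarrow>
     s ` E1 \<subseteq> E0 \<and> r ` E1 \<subseteq> E0 \<and>
     (\<forall>v. \<not> nonsink E0 E1 s v \<longrightarrow> C v = {}) \<and>
     (\<forall>v. nonsink E0 E1 s v \<longrightarrow>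
        \<Union>(C v) = {e \<in> E1. s e = v} \<and>
        (\<forall>X\<in>C v. X \<noteq> {}) \<and>
        (\<forall>X\<in>C v. \<forall>Y\<in>C v. X \<noteq> Y \<longrightarrow> X \<inter> Y = {}))"

definition sg_C :: "'v set \<Rightarrow> ('v \<Rightarrow> 'e set set) \<Rightarrow> 'e set set" where
  "sg_C E0 C = (\<Union>v\<in>E0. C v)"

definition sg_Cfin :: "'v set \<Rightarrow> ('v \<Rightarrow> 'e set set) \<Rightarrow> 'e set set" where
  "sg_Cfin E0 C = {X \<in> sg_C E0 C. finite X}"

datatype ('v, 'e) clgen = GV 'v | GE 'e | GS 'e   \<comment> \<open>v, e, e^*\<close>

definition gens :: "'v set \<Rightarrow> 'e set \<Rightarrow> ('v, 'e) clgen set" where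
  "gens E0 E1 = GV ` E0 \<union> GE ` E1 \<union> GS ` E1"

text \<open>Elements of the free non-unital K-algebra on the generators: finitely supported
  K-valued functions on nonempty words over the generators.\<close>
definition free_alg :: "'v set \<Rightarrow> 'e set \<Rightarrow> (('v, 'e) clgen list \<Rightarrow> 'k::field) set" where
  "free_alg E0 E1 = {p. finite {w. p w \<noteq> 0} \<and> p [] = 0 \<and>
                        (\<forall>w. p w \<noteq> 0 \<longrightarrow> set w \<subseteq> gens E0 E1)}"

definition fa_add :: "('g list \<Rightarrow> 'k::field) \<Rightarrow> ('g list \<Rightarrow> 'k) \<Rightarrow> 'g list \<Rightarrow> 'k" where
  "fa_add p q = (\<lambda>w. p w + q w)"

definition fa_smult :: "'k::field \<Rightarrow> ('g list \<Rightarrow> 'k) \<Rightarrow> 'g list \<Rightarrow> 'k" where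
  "fa_smult c p = (\<lambda>w. c * p w)"

definition fa_mult :: "('g list \<Rightarrow> 'k::field) \<Rightarrow> ('g list \<Rightarrow> 'k) \<Rightarrow> 'g list \<Rightarrow> 'k" where
  "fa_mult p q = (\<lambda>w. \<Sum>i\<in>{0..length w}. p (take i w) * q (drop i w))"

definition mon :: "'g list \<Rightarrow> 'g list \<Rightarrow> 'k::field" where
  "mon u = (\<lambda>w. if w = u then 1 else 0)"

definition fa_diff :: "('g list \<Rightarrow> 'k::field) \<Rightarrow> ('g list \<Rightarrow> 'k) \<Rightarrow> 'g list \<Rightarrow> 'k" where
  "fa_diff p q = (\<lambda>w. p w - q w)"

text \<open>The defining relations of L_K(E,C,S) (each relation "a = b" is encoded as a - b).\<close>
definition CL_rels ::
  "'v set \<Rightarrow> 'e set \<Rightarrow> ('e \<Rightarrow> 'v) \<Rightarrow> ('e \<Rightarrow> 'v) \<Rightarrow> ('v \<Rightarrow> 'e set set) \<Rightarrow> 'e set set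
   \<Rightarrow> (('v, 'e) clgen list \<Rightarrow> 'k::field) set" where
  "CL_rels E0 E1 r s C S =
     {fa_diff (mon [GV v, GV w]) (if v = w then mon [GV v] else (\<lambda>_. 0)) | v w. v \<in> E0 \<and> w \<in> E0}
   \<union> {fa_diff (mon [GV (s e), GE e]) (mon [GE e]) | e. e \<in> E1}
   \<union> {fa_diff (mon [GE e, GV (r e)]) (mon [GE e]) | e. e \<in> E1}
   \<union> {fa_diff (mon [GV (r e), GS e]) (mon [GS e]) | e. e \<in> E1}
   \<union> {fa_diff (mon [GS e, GV (s e)]) (mon [GS e]) | e. e \<in> E1}
   \<union> {fa_diff (mon [GS e, GE f]) (if e = f then mon [GV (r e)] else (\<lambda>_. 0)) | e f Y.
        Y \<in> sg_C E0 C \<and> e \<in> Y \<and> f \<in> Y}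
   \<union> {fa_diff (mon [GV v]) (\<lambda>w. \<Sum>e\<in>X. mon [GE e, GS e] w) | v X.
        nonsink E0 E1 s v \<and> X \<in> S \<and> X \<in> C v}"

inductive_set CL_ideal ::
  "'v set \<Rightarrow> 'e set \<Rightarrow> ('e \<Rightarrow> 'v) \<Rightarrow> ('e \<Rightarrow> 'v) \<Rightarrow> ('v \<Rightarrow> 'e set set) \<Rightarrow> 'e set set
   \<Rightarrow> (('v, 'e) clgen list \<Rightarrow> 'k::field) set"
  for E0 E1 r s C S where
  rel: "a \<in> CL_rels E0 E1 r s C S \<Longrightarrow> a \<in> CL_ideal E0 E1 r s C S"
| zero: "(\<lambda>_. 0) \<in> CL_ideal E0 E1 r s C S"
| add: "a \<in> CL_ideal E0 E1 r s C S \<Longrightarrow> b \<in> CL_ideal E0 E1 r s C S \<Longrightarrow>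
        fa_add a b \<in> CL_ideal E0 E1 r s C S"
| smult: "a \<in> CL_ideal E0 E1 r s C S \<Longrightarrow> fa_smult c a \<in> CL_ideal E0 E1 r s C S"
| lmult: "a \<in> CL_ideal E0 E1 r s C S \<Longrightarrow> x \<in> free_alg E0 E1 \<Longrightarrow>
        fa_mult x a \<in> CL_ideal E0 E1 r s C S"
| rmult: "a \<in> CL_ideal E0 E1 r s C S \<Longrightarrow> x \<in> free_alg E0 E1 \<Longrightarrow>
        fa_mult a x \<in> CL_ideal E0 E1 r s C S"

definition CL_cong ::
  "'v set \<Rightarrow> 'e set \<Rightarrow> ('e \<Rightarrow> 'v) \<Rightarrow> ('e \<Rightarrow> 'v) \<Rightarrow> ('v \<Rightarrow> 'e set set) \<Rightarrow> 'e set set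
   \<Rightarrow> ((('v, 'e) clgen list \<Rightarrow> 'k::field) \<times> (('v, 'e) clgen list \<Rightarrow> 'k)) set" where
  "CL_cong E0 E1 r s C S = {(a, b). a \<in> free_alg E0 E1 \<and> b \<in> free_alg E0 E1 \<and>
                                     fa_diff a b \<in> CL_ideal E0 E1 r s C S}"

definition CL_class ::
  "'v set \<Rightarrow> 'e set \<Rightarrow> ('e \<Rightarrow> 'v) \<Rightarrow> ('e \<Rightarrow> 'v) \<Rightarrow> ('v \<Rightarrow> 'e set set) \<Rightarrow> 'e set set
   \<Rightarrow> (('v, 'e) clgen list \<Rightarrow> 'k::field) \<Rightarrow> (('v, 'e) clgen list \<Rightarrow> 'k) set" where
  "CL_class E0 E1 r s C S a = CL_cong E0 E1 r s C S `` {a}"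

definition CL_algebra ::
  "'v set \<Rightarrow> 'e set \<Rightarrow> ('e \<Rightarrow> 'v) \<Rightarrow> ('e \<Rightarrow> 'v) \<Rightarrow> ('v \<Rightarrow> 'e set set) \<Rightarrow> 'e set set
   \<Rightarrow> (('v, 'e) clgen list \<Rightarrow> 'k::field) set set" where
  "CL_algebra E0 E1 r s C S = free_alg E0 E1 // CL_cong E0 E1 r s C S"

text \<open>M is represented as the functions X \<Rightarrow> K, i.e. real-valued-domain functions vanishing
  outside X. An element of Hom_K(M) is a K-linear self-map of M (compared on M).\<close>
definition fun_module :: "real set \<Rightarrow> (real \<Rightarrow> 'k::field) set" where
  "fun_module X = {\<phi>. \<forall>x. x \<notin> X \<longrightarrow> \<phi> x = 0}"

definition is_endo :: "(real \<Rightarrow> 'k::field) set \<Rightarrow> ((real \<Rightarrow> 'k) \<Rightarrow> (real \<Rightarrow> 'k)) \<Rightarrow> bool" where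
  "is_endo M T \<longleftrightarrow> (\<forall>\<phi>\<in>M. T \<phi> \<in> M) \<and>
     (\<forall>\<phi>\<in>M. \<forall>\<psi>\<in>M. T (\<lambda>x. \<phi> x + \<psi> x) = (\<lambda>x. T \<phi> x + T \<psi> x)) \<and>
     (\<forall>c. \<forall>\<phi>\<in>M. T (\<lambda>x. c * \<phi> x) = (\<lambda>x. c * T \<phi> x))"

text \<open>\<pi> is a K-algebra homomorphism L_K(E,C,S) \<rightarrow> Hom_K(M), the operations of L_K being
  induced by those of the free algebra on representatives.\<close>
definition CL_hom ::
  "'v set \<Rightarrow> 'e set \<Rightarrow> ('e \<Rightarrow> 'v) \<Rightarrow> ('e \<Rightarrow> 'v) \<Rightarrow> ('v \<Rightarrow> 'e set set) \<Rightarrow> 'e set set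
   \<Rightarrow> real set \<Rightarrow> ((('v, 'e) clgen list \<Rightarrow> 'k::field) set \<Rightarrow> (real \<Rightarrow> 'k) \<Rightarrow> (real \<Rightarrow> 'k)) \<Rightarrow> bool" where
  "CL_hom E0 E1 r s C S X \<pi> \<longleftrightarrow>
     (let cls = CL_class E0 E1 r s C S; M = fun_module X in
       (\<forall>A\<in>CL_algebra E0 E1 r s C S. is_endo M (\<pi> A)) \<and>
       (\<forall>a\<in>free_alg E0 E1. \<forall>b\<in>free_alg E0 E1. \<forall>\<phi>\<in>M.
          \<pi> (cls (fa_add a b)) \<phi> = (\<lambda>x. \<pi> (cls a) \<phi> x + \<pi> (cls b) \<phi> x)) \<and>
       (\<forall>c. \<forall>a\<in>free_alg E0 E1. \<forall>\<phi>\<in>M.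
          \<pi> (cls (fa_smult c a)) \<phi> = (\<lambda>x. c * \<pi> (cls a) \<phi> x)) \<and>
       (\<forall>a\<in>free_alg E0 E1. \<forall>b\<in>free_alg E0 E1. \<forall>\<phi>\<in>M.
          \<pi> (cls (fa_mult a b)) \<phi> = \<pi> (cls a) (\<pi> (cls b) \<phi>)))"

definition branching_system ::
  "'v set \<Rightarrow> 'e set \<Rightarrow> ('e \<Rightarrow> 'v) \<Rightarrow> ('e \<Rightarrow> 'v) \<Rightarrow> ('v \<Rightarrow> 'e set set) \<Rightarrow> 'e set set
   \<Rightarrow> 'x set \<Rightarrow> ('e \<Rightarrow> 'x set) \<Rightarrow> ('v \<Rightarrow> 'x set) \<Rightarrow> ('e \<Rightarrow> 'x \<Rightarrow> 'x) \<Rightarrow> bool" where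
  "branching_system E0 E1 r s C S X R D f \<longleftrightarrow>
     (\<forall>e\<in>E1. R e \<subseteq> X) \<and> (\<forall>v\<in>E0. D v \<subseteq> X) \<and>
     (\<forall>Y\<in>sg_C E0 C. \<forall>d\<in>Y. \<forall>e\<in>Y. d \<noteq> e \<longrightarrow> R d \<inter> R e = {}) \<and>
     (\<forall>v\<in>E0. \<forall>w\<in>E0. v \<noteq> w \<longrightarrow> D v \<inter> D w = {}) \<and>
     (\<forall>e\<in>E1. R e \<subseteq> D (s e)) \<and>
     (\<forall>v\<in>E0. \<forall>Y\<in>S. Y \<in> C v \<longrightarrow> D v = (\<Union>e\<in>Y. R e)) \<and>
     (\<forall>e\<in>E1. bij_betw (f e) (D (r e)) (R e))"

end

theory Submission
  imports Defs "HOL-Library.More_List"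
begin

text \<open>A branching system on X lets the generators act on K-valued functions on X: a vertex v
  multiplies by the characteristic function of D v, while e and e* transport functions along f e.
  Extended to words and to finite linear combinations of words this is a representation of the
  free algebra, and the axioms of a branching system say precisely that every defining relation
  of L_K(E,C,S) acts as zero, so the representation factors through the quotient.

  The branching system is built on the countable set of pairs (i, t) of a natural number i and a
  finite sequence t of natural numbers, entries beyond the end of t reading as 0. D v is the fibre
  over the index of v, and every partition class Y owns one coordinate of t: R e consists of the
  pairs whose Y-coordinate codes e, modulo |Y| if Y is in S (so that the R e, e in Y, cover D v)
  and shifted by one otherwise (so that the value 0 is never covered). Distinct classes use
  distinct coordinates, which gives conditions (i)-(iii). All D v and R e are countably infinite,
  so the bijections f e exist, and an injection into the reals transports the system to the
  interval of all reals.\<close>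

lemma separated_graphD:
  assumes "separated_graph E0 E1 r s C"
  shows "s ` E1 \<subseteq> E0" "r ` E1 \<subseteq> E0"
    and "\<not> nonsink E0 E1 s v \<Longrightarrow> C v = {}"
    and "nonsink E0 E1 s v \<Longrightarrow> \<Union>(C v) = {e \<in> E1. s e = v}"
    and "nonsink E0 E1 s v \<Longrightarrow> Y \<in> C v \<Longrightarrow> Y \<noteq> {}"
    and "nonsink E0 E1 s v \<Longrightarrow> Y \<in> C v \<Longrightarrow> Y' \<in> C v \<Longrightarrow> Y \<noteq> Y' \<Longrightarrow> Y \<inter> Y' = {}"
  using assms unfolding separated_graph_def by simp_all

lemma separated_graph_class_nonsink:
  assumes "separated_graph E0 E1 r s C" "Y \<in> C v"
  shows "nonsink E0 E1 s v"
proof (rule ccontr)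
  assume "\<not> nonsink E0 E1 s v"
  then show False
    using separated_graphD(3)[OF assms(1)] assms(2) by simp
qed

lemma separated_graph_class_edge:
  assumes "separated_graph E0 E1 r s C" "Y \<in> C v" "e \<in> Y"
  shows "e \<in> E1 \<and> s e = v"
proof -
  have "e \<in> \<Union>(C v)"
    using assms(2,3) by blast
  then show ?thesis
    using separated_graphD(4)[OF assms(1) separated_graph_class_nonsink[OF assms(1,2)]] by simp
qed

lemma separated_graph_class_nonempty:
  "separated_graph E0 E1 r s C \<Longrightarrow> Y \<in> C v \<Longrightarrow> Y \<noteq> {}"
  using separated_graphD(5) separated_graph_class_nonsink by metis

lemma separated_graph_class_unique:
  assumes "separated_graph E0 E1 r s C" "Y \<in> C v" "Y' \<in> C v" "e \<in> Y" "e \<in> Y'"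
  shows "Y = Y'"
proof (rule ccontr)
  assume "Y \<noteq> Y'"
  then have "Y \<inter> Y' = {}"
    using separated_graphD(6)[OF assms(1) separated_graph_class_nonsink[OF assms(1,2)] assms(2,3)]
    by simp
  then show False
    using assms(4,5) by blast
qed

lemma separated_graph_edge_class:
  assumes "separated_graph E0 E1 r s C" "e \<in> E1"
  shows "\<exists>Y\<in>C (s e). e \<in> Y"
proof -
  have "nonsink E0 E1 s (s e)"
    using separated_graphD(1)[OF assms(1)] assms(2) by (auto simp: nonsink_def)
  then have "\<Union>(C (s e)) = {e' \<in> E1. s e' = s e}"
    by (rule separated_graphD(4)[OF assms(1)])
  then show ?thesis
    using assms(2) by blast
qed

definition fa_supp :: "('g list \<Rightarrow> 'k::field) \<Rightarrow> 'g list set" where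
  "fa_supp p = {w. p w \<noteq> 0}"

lemma finite_fa_supp_add:
  "finite (fa_supp a) \<Longrightarrow> finite (fa_supp b) \<Longrightarrow> finite (fa_supp (fa_add a b))"
  by (rule finite_subset[of _ "fa_supp a \<union> fa_supp b"]) (auto simp: fa_supp_def fa_add_def)

lemma finite_fa_supp_diff:
  "finite (fa_supp a) \<Longrightarrow> finite (fa_supp b) \<Longrightarrow> finite (fa_supp (fa_diff a b))"
  by (rule finite_subset[of _ "fa_supp a \<union> fa_supp b"]) (auto simp: fa_supp_def fa_diff_def)

lemma finite_fa_supp_smult: "finite (fa_supp a) \<Longrightarrow> finite (fa_supp (fa_smult c a))"
  by (rule finite_subset[of _ "fa_supp a"]) (auto simp: fa_supp_def fa_smult_def)

lemma fa_supp_mon [simp]: "fa_supp (mon u :: 'g list \<Rightarrow> 'k::field) = {u}"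
  by (auto simp: fa_supp_def mon_def)

lemma fa_supp_zero [simp]: "fa_supp (\<lambda>_. 0 :: 'k::field) = {}"
  by (simp add: fa_supp_def)

lemma finite_fa_supp_sum:
  "finite I \<Longrightarrow> (\<And>i. i \<in> I \<Longrightarrow> finite (fa_supp (p i))) \<Longrightarrow>
   finite (fa_supp (\<lambda>w. \<Sum>i\<in>I. p i w))"
  by (rule finite_subset[of _ "\<Union>i\<in>I. fa_supp (p i)"])
     (auto simp: fa_supp_def intro: sum.neutral)

lemma fa_supp_mult: "fa_supp (fa_mult a b) \<subseteq> (\<lambda>p. fst p @ snd p) ` (fa_supp a \<times> fa_supp b)"
proof
  fix w assume "w \<in> fa_supp (fa_mult a b)"
  then have "(\<Sum>i\<in>{0..length w}. a (take i w) * b (drop i w)) \<noteq> 0"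
    by (simp add: fa_supp_def fa_mult_def)
  then obtain i where "a (take i w) * b (drop i w) \<noteq> 0"
    by (meson sum.neutral)
  then have "(take i w, drop i w) \<in> fa_supp a \<times> fa_supp b"
    by (simp add: fa_supp_def)
  then show "w \<in> (\<lambda>p. fst p @ snd p) ` (fa_supp a \<times> fa_supp b)"
    by (rule rev_image_eqI) simp
qed

lemma finite_fa_supp_mult:
  "finite (fa_supp a) \<Longrightarrow> finite (fa_supp b) \<Longrightarrow> finite (fa_supp (fa_mult a b))"
  by (blast intro: finite_subset[OF fa_supp_mult] finite_cartesian_product)

lemma fa_mult_eq_sum_factorizations:
  assumes "finite A" "finite B" "fa_supp a \<subseteq> A" "fa_supp b \<subseteq> B"
  shows "fa_mult a b w = (\<Sum>p\<in>{p \<in> A \<times> B. fst p @ snd p = w}. a (fst p) * b (snd p))"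
proof -
  let ?split = "\<lambda>i. (take i w, drop i w)"
  have inj: "inj_on ?split {0..length w}"
    by (rule inj_onI) (metis atLeastAtMost_iff length_take min.absorb2 prod.inject)
  have img: "?split ` {0..length w} = {p. fst p @ snd p = w}"
  proof
    show "{p. fst p @ snd p = w} \<subseteq> ?split ` {0..length w}"
    proof
      fix p assume "p \<in> {p. fst p @ snd p = w}"
      then show "p \<in> ?split ` {0..length w}"
        by (intro image_eqI[of _ _ "length (fst p)"]) auto
    qed
  qed auto
  have "fa_mult a b w = (\<Sum>p\<in>{p. fst p @ snd p = w}. a (fst p) * b (snd p))"
    unfolding fa_mult_def img[symmetric] by (simp add: sum.reindex[OF inj])
  also have "\<dots> = (\<Sum>p\<in>{p \<in> A \<times> B. fst p @ snd p = w}. a (fst p) * b (snd p))"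
  proof (rule sum.mono_neutral_right)
    show "finite {p. fst p @ snd p = w}"
      unfolding img[symmetric] by simp
  qed (use assms(3,4) in \<open>auto simp: fa_supp_def\<close>)
  finally show ?thesis .
qed

lemma free_alg_iff:
  "p \<in> free_alg E0 E1 \<longleftrightarrow>
     finite (fa_supp p) \<and> p [] = 0 \<and> (\<forall>w\<in>fa_supp p. set w \<subseteq> gens E0 E1)"
  by (auto simp: free_alg_def fa_supp_def)

lemma free_alg_finite_supp: "p \<in> free_alg E0 E1 \<Longrightarrow> finite (fa_supp p)"
  by (simp add: free_alg_iff)

lemma free_alg_add:
  "a \<in> free_alg E0 E1 \<Longrightarrow> b \<in> free_alg E0 E1 \<Longrightarrow> fa_add a b \<in> free_alg E0 E1"
  unfolding free_alg_iff using finite_fa_supp_add by (fastforce simp: fa_supp_def fa_add_def)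

lemma free_alg_smult: "a \<in> free_alg E0 E1 \<Longrightarrow> fa_smult c a \<in> free_alg E0 E1"
  unfolding free_alg_iff using finite_fa_supp_smult by (fastforce simp: fa_supp_def fa_smult_def)

lemma free_alg_mult:
  assumes "a \<in> free_alg E0 E1" "b \<in> free_alg E0 E1"
  shows "fa_mult a b \<in> free_alg E0 E1"
proof -
  have "set w \<subseteq> gens E0 E1" if "w \<in> fa_supp (fa_mult a b)" for w
    using that fa_supp_mult[of a b] assms by (fastforce simp: free_alg_iff)
  then show ?thesis
    using assms finite_fa_supp_mult[of a b] by (simp add: free_alg_iff fa_mult_def)
qed

lemma free_alg_mon: "g \<in> gens E0 E1 \<Longrightarrow> mon [g] \<in> free_alg E0 E1"
  by (simp add: free_alg_iff) (simp add: mon_def)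


section \<open>Representations from branching systems\<close>

locale word_action =
  fixes r :: "'e \<Rightarrow> 'v" and D :: "'v \<Rightarrow> 'x set" and R :: "'e \<Rightarrow> 'x set"
    and f :: "'e \<Rightarrow> 'x \<Rightarrow> 'x"
begin

fun gen_op :: "('v, 'e) clgen \<Rightarrow> ('x \<Rightarrow> 'k::field) \<Rightarrow> 'x \<Rightarrow> 'k" where
  "gen_op (GV v) \<phi> = (\<lambda>x. if x \<in> D v then \<phi> x else 0)"
| "gen_op (GE e) \<phi> = (\<lambda>x. if x \<in> R e then \<phi> (the_inv_into (D (r e)) (f e) x) else 0)"
| "gen_op (GS e) \<phi> = (\<lambda>x. if x \<in> D (r e) then \<phi> (f e x) else 0)"

fun word_act :: "('v, 'e) clgen list \<Rightarrow> ('x \<Rightarrow> 'k::field) \<Rightarrow> 'x \<Rightarrow> 'k" where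
  "word_act [] \<phi> = \<phi>"
| "word_act (g # w) \<phi> = gen_op g (word_act w \<phi>)"

definition fa_rep :: "(('v, 'e) clgen list \<Rightarrow> 'k::field) \<Rightarrow> ('x \<Rightarrow> 'k) \<Rightarrow> 'x \<Rightarrow> 'k" where
  "fa_rep p \<phi> = (\<lambda>x. \<Sum>w\<in>fa_supp p. p w * word_act w \<phi> x)"

lemma word_act_append: "word_act (u @ w) \<phi> = word_act u (word_act w \<phi>)"
  by (induction u) simp_all

lemma gen_op_linear:
  "gen_op g (\<lambda>x. \<Sum>i\<in>I. c i * \<psi> i x) = (\<lambda>x. \<Sum>i\<in>I. c i * gen_op g (\<psi> i) x)"
  by (cases g) auto

lemma word_act_linear:
  "word_act w (\<lambda>x. \<Sum>i\<in>I. c i * \<psi> i x) = (\<lambda>x. \<Sum>i\<in>I. c i * word_act w (\<psi> i) x)"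
  by (induction w) (simp_all add: gen_op_linear)

lemma gen_op_add: "gen_op g (\<lambda>x. \<phi> x + \<psi> x) = (\<lambda>x. gen_op g \<phi> x + gen_op g \<psi> x)"
  by (cases g) auto

lemma gen_op_smult: "gen_op g (\<lambda>x. c * \<phi> x) = (\<lambda>x. c * gen_op g \<phi> x)"
  by (cases g) auto

lemma word_act_add: "word_act w (\<lambda>x. \<phi> x + \<psi> x) = (\<lambda>x. word_act w \<phi> x + word_act w \<psi> x)"
  by (induction w) (simp_all add: gen_op_add)

lemma word_act_smult: "word_act w (\<lambda>x. c * \<phi> x) = (\<lambda>x. c * word_act w \<phi> x)"
  by (induction w) (simp_all add: gen_op_smult)

lemma word_act_zero: "word_act w (\<lambda>x. 0) = (\<lambda>x. 0)"
  using word_act_smult[of w 0 "\<lambda>x. 0"] by simp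

lemma fa_rep_superset:
  "finite F \<Longrightarrow> fa_supp p \<subseteq> F \<Longrightarrow> fa_rep p \<phi> = (\<lambda>x. \<Sum>w\<in>F. p w * word_act w \<phi> x)"
  unfolding fa_rep_def by (rule ext, rule sum.mono_neutral_left) (auto simp: fa_supp_def)

lemma fa_rep_mon: "fa_rep (mon u) \<phi> = word_act u \<phi>"
  by (simp add: fa_rep_def) (simp add: mon_def)

lemma fa_rep_zero: "fa_rep (\<lambda>_. 0) \<phi> = (\<lambda>x. 0)"
  by (simp add: fa_rep_def)

lemma fa_rep_add_fun: "fa_rep p (\<lambda>x. \<phi> x + \<psi> x) = (\<lambda>x. fa_rep p \<phi> x + fa_rep p \<psi> x)"
  by (simp add: fa_rep_def word_act_add distrib_left sum.distrib)

lemma fa_rep_smult_fun: "fa_rep p (\<lambda>x. c * \<phi> x) = (\<lambda>x. c * fa_rep p \<phi> x)"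
  by (simp add: fa_rep_def word_act_smult sum_distrib_left algebra_simps)

lemma fa_rep_zero_fun: "fa_rep p (\<lambda>x. 0) = (\<lambda>x. 0)"
  by (simp add: fa_rep_def word_act_zero)

lemma fa_rep_add:
  assumes "finite (fa_supp a)" "finite (fa_supp b)"
  shows "fa_rep (fa_add a b) \<phi> = (\<lambda>x. fa_rep a \<phi> x + fa_rep b \<phi> x)"
proof -
  let ?F = "fa_supp a \<union> fa_supp b"
  have "fa_rep (fa_add a b) \<phi> = (\<lambda>x. \<Sum>w\<in>?F. fa_add a b w * word_act w \<phi> x)"
    by (rule fa_rep_superset) (use assms in \<open>auto simp: fa_supp_def fa_add_def\<close>)
  moreover have "fa_rep a \<phi> = (\<lambda>x. \<Sum>w\<in>?F. a w * word_act w \<phi> x)"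
    and "fa_rep b \<phi> = (\<lambda>x. \<Sum>w\<in>?F. b w * word_act w \<phi> x)"
    by (rule fa_rep_superset; use assms in auto)+
  ultimately show ?thesis by (simp add: fa_add_def distrib_right sum.distrib)
qed

lemma fa_rep_diff:
  assumes "finite (fa_supp a)" "finite (fa_supp b)"
  shows "fa_rep (fa_diff a b) \<phi> = (\<lambda>x. fa_rep a \<phi> x - fa_rep b \<phi> x)"
proof -
  let ?F = "fa_supp a \<union> fa_supp b"
  have "fa_rep (fa_diff a b) \<phi> = (\<lambda>x. \<Sum>w\<in>?F. fa_diff a b w * word_act w \<phi> x)"
    by (rule fa_rep_superset) (use assms in \<open>auto simp: fa_supp_def fa_diff_def\<close>)
  moreover have "fa_rep a \<phi> = (\<lambda>x. \<Sum>w\<in>?F. a w * word_act w \<phi> x)"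
    and "fa_rep b \<phi> = (\<lambda>x. \<Sum>w\<in>?F. b w * word_act w \<phi> x)"
    by (rule fa_rep_superset; use assms in auto)+
  ultimately show ?thesis by (simp add: fa_diff_def left_diff_distrib sum_subtractf)
qed

lemma fa_rep_smult: "fa_rep (fa_smult c a) \<phi> = (\<lambda>x. c * fa_rep a \<phi> x)"
proof (cases "c = 0")
  case False
  then have "fa_supp (fa_smult c a) = fa_supp a"
    by (auto simp: fa_supp_def fa_smult_def)
  then show ?thesis
    by (simp add: fa_rep_def fa_smult_def sum_distrib_left mult.assoc)
qed (simp add: fa_smult_def fa_rep_zero)

lemma fa_rep_sum:
  "finite I \<Longrightarrow> (\<And>i. i \<in> I \<Longrightarrow> finite (fa_supp (p i))) \<Longrightarrow>
   fa_rep (\<lambda>w. \<Sum>i\<in>I. p i w) \<phi> = (\<lambda>x. \<Sum>i\<in>I. fa_rep (p i) \<phi> x)"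
proof (induction I rule: finite_induct)
  case (insert i I)
  have "(\<lambda>w. \<Sum>i\<in>insert i I. p i w) = fa_add (p i) (\<lambda>w. \<Sum>i\<in>I. p i w)"
    using insert by (simp add: fa_add_def)
  then show ?case
    using insert finite_fa_supp_sum[of I p] by (simp add: fa_rep_add)
qed (simp add: fa_rep_zero)

lemma fa_rep_mult:
  assumes a: "finite (fa_supp a)" and b: "finite (fa_supp b)"
  shows "fa_rep (fa_mult a b) \<phi> = fa_rep a (fa_rep b \<phi>)"
proof -
  let ?A = "fa_supp a" and ?B = "fa_supp b"
  let ?cat = "\<lambda>p. fst p @ snd p"
  let ?F = "?cat ` (?A \<times> ?B)"
  have "fa_rep (fa_mult a b) \<phi> = (\<lambda>x. \<Sum>w\<in>?F. fa_mult a b w * word_act w \<phi> x)"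
    by (rule fa_rep_superset[OF _ fa_supp_mult]) (use a b in simp)
  also have "\<dots> = (\<lambda>x. \<Sum>w\<in>?F. \<Sum>p\<in>{p \<in> ?A \<times> ?B. ?cat p = w}.
                        a (fst p) * b (snd p) * word_act (?cat p) \<phi> x)"
    by (simp add: fa_mult_eq_sum_factorizations[OF a b] sum_distrib_right)
  also have "\<dots> = (\<lambda>x. \<Sum>p\<in>?A \<times> ?B. a (fst p) * b (snd p) * word_act (?cat p) \<phi> x)"
    by (rule ext, rule sum.image_gen[symmetric]) (use a b in auto)
  also have "\<dots> = (\<lambda>x. \<Sum>u\<in>?A. \<Sum>v\<in>?B. a u * (b v * word_act u (word_act v \<phi>) x))"
    by (simp add: sum.cartesian_product word_act_append mult.assoc split_def)
  also have "\<dots> = fa_rep a (fa_rep b \<phi>)"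
    by (simp add: fa_rep_def word_act_linear sum_distrib_left)
  finally show ?thesis .
qed

lemma fa_rep_diff_zero:
  assumes "a = fa_diff p q" "finite (fa_supp p)" "finite (fa_supp q)"
    and "\<And>\<phi>. fa_rep p \<phi> = fa_rep q \<phi>"
  shows "finite (fa_supp a) \<and> (\<forall>\<phi>. fa_rep a \<phi> = (\<lambda>x. 0))"
  using assms by (simp add: finite_fa_supp_diff fa_rep_diff)

end

locale branching_rep = word_action r D R f
  for E0 :: "'v set" and E1 :: "'e set" and r s :: "'e \<Rightarrow> 'v"
    and C :: "'v \<Rightarrow> 'e set set" and S :: "'e set set" and X :: "real set"
    and D :: "'v \<Rightarrow> real set" and R :: "'e \<Rightarrow> real set" and f :: "'e \<Rightarrow> real \<Rightarrow> real" +
  assumes separated: "separated_graph E0 E1 r s C"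
    and S_finite: "S \<subseteq> sg_Cfin E0 C"
    and branching: "branching_system E0 E1 r s C S X R D f"
begin

lemma branching_facts:
  shows R_subset_X: "e \<in> E1 \<Longrightarrow> R e \<subseteq> X"
    and D_subset_X: "v \<in> E0 \<Longrightarrow> D v \<subseteq> X"
    and R_disjoint: "Y \<in> sg_C E0 C \<Longrightarrow> d \<in> Y \<Longrightarrow> e \<in> Y \<Longrightarrow> d \<noteq> e \<Longrightarrow> R d \<inter> R e = {}"
    and D_disjoint: "v \<in> E0 \<Longrightarrow> w \<in> E0 \<Longrightarrow> v \<noteq> w \<Longrightarrow> D v \<inter> D w = {}"
    and R_subset_D_source: "e \<in> E1 \<Longrightarrow> R e \<subseteq> D (s e)"
    and D_eq_Union_R: "v \<in> E0 \<Longrightarrow> Y \<in> S \<Longrightarrow> Y \<in> C v \<Longrightarrow> D v = (\<Union>e\<in>Y. R e)"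
    and bij_betw_f: "e \<in> E1 \<Longrightarrow> bij_betw (f e) (D (r e)) (R e)"
  using branching unfolding branching_system_def by simp_all

lemma f_inverse:
  assumes "e \<in> E1"
  shows "x \<in> R e \<Longrightarrow> the_inv_into (D (r e)) (f e) x \<in> D (r e)"
    and "x \<in> R e \<Longrightarrow> f e (the_inv_into (D (r e)) (f e) x) = x"
    and "x \<in> D (r e) \<Longrightarrow> the_inv_into (D (r e)) (f e) (f e x) = x"
    and "x \<in> D (r e) \<Longrightarrow> f e x \<in> R e"
  using bij_betw_f[OF assms]
  by (auto simp: bij_betw_def the_inv_into_into f_the_inv_into_f the_inv_into_f_f)

lemma word_act_vertex_vertex:
  "v \<in> E0 \<Longrightarrow> w \<in> E0 \<Longrightarrow>
   word_act [GV v, GV w] \<phi> = (if v = w then word_act [GV v] \<phi> else (\<lambda>x. 0))"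
  by (cases "v = w") (use D_disjoint[of v w] in \<open>auto simp: fun_eq_iff\<close>)

lemma word_act_source_edge: "e \<in> E1 \<Longrightarrow> word_act [GV (s e), GE e] \<phi> = word_act [GE e] \<phi>"
  using R_subset_D_source[of e] by (auto simp: fun_eq_iff)

lemma word_act_edge_range: "e \<in> E1 \<Longrightarrow> word_act [GE e, GV (r e)] \<phi> = word_act [GE e] \<phi>"
  using f_inverse(1)[of e] by (auto simp: fun_eq_iff)

lemma word_act_range_ghost: "word_act [GV (r e), GS e] \<phi> = word_act [GS e] \<phi>"
  by (auto simp: fun_eq_iff)

lemma word_act_ghost_source: "e \<in> E1 \<Longrightarrow> word_act [GS e, GV (s e)] \<phi> = word_act [GS e] \<phi>"
  using f_inverse(4)[of e] R_subset_D_source[of e] by (auto simp: fun_eq_iff)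

lemma word_act_ghost_edge:
  assumes "Y \<in> sg_C E0 C" "e \<in> Y" "d \<in> Y"
  shows "word_act [GS e, GE d] \<phi> = (if e = d then word_act [GV (r e)] \<phi> else (\<lambda>x. 0))"
proof -
  have "e \<in> E1" using assms separated_graph_class_edge[OF separated]
    by (auto simp: sg_C_def)
  moreover have "f e x \<notin> R d" if "x \<in> D (r e)" "e \<noteq> d" for x
    using f_inverse(4)[OF \<open>e \<in> E1\<close> that(1)] R_disjoint[OF assms that(2)] by blast
  ultimately show ?thesis
    using f_inverse[of e] by (auto simp: fun_eq_iff)
qed

lemma word_act_edge_ghost: "e \<in> E1 \<Longrightarrow> word_act [GE e, GS e] \<phi> = (\<lambda>x. if x \<in> R e then \<phi> x else 0)"
  using f_inverse[of e] by (auto simp: fun_eq_iff)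

lemma word_act_Cuntz_Krieger:
  assumes v: "v \<in> E0" and Y: "Y \<in> S" "Y \<in> C v"
  shows "(\<lambda>x. \<Sum>e\<in>Y. word_act [GE e, GS e] \<phi> x) = word_act [GV v] \<phi>"
proof
  fix x
  have fin: "finite Y" using Y S_finite by (auto simp: sg_Cfin_def)
  have edges: "e \<in> E1" if "e \<in> Y" for e
    using separated_graph_class_edge[OF separated Y(2) that] by blast
  have disj: "disjoint_family_on R Y"
    using R_disjoint v Y by (auto simp: disjoint_family_on_def sg_C_def)
  have "(\<Sum>e\<in>Y. word_act [GE e, GS e] \<phi> x) = (\<Sum>e\<in>Y. \<phi> x * indicator (R e) x)"
    using edges
    by (intro sum.cong)
      (simp_all add: word_act_edge_ghost indicator_times_eq_if del: word_act.simps)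
  also have "\<dots> = \<phi> x * indicator (\<Union>e\<in>Y. R e) x"
    using fin disj
    by (simp add: indicator_UN_disjoint sum_distrib_left)
  also have "\<dots> = word_act [GV v] \<phi> x"
    using D_eq_Union_R[OF v Y] by (simp add: indicator_times_eq_if)
  finally show "(\<Sum>e\<in>Y. word_act [GE e, GS e] \<phi> x) = word_act [GV v] \<phi> x" .
qed

lemma CL_rels_act_zero:
  assumes "a \<in> CL_rels E0 E1 r s C S"
  shows "finite (fa_supp a) \<and> (\<forall>\<phi>. fa_rep a \<phi> = (\<lambda>x. 0 :: 'k::field))"
  using assms unfolding CL_rels_def
proof (elim UnE CollectE exE conjE)
  fix v w assume a: "a = fa_diff (mon [GV v, GV w]) (if v = w then mon [GV v] else (\<lambda>_. 0))"
    and vw: "v \<in> E0" "w \<in> E0"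
  show ?thesis
    by (intro fa_rep_diff_zero[OF a])
      (simp_all add: fa_rep_mon fa_rep_zero word_act_vertex_vertex[OF vw] del: word_act.simps)
next
  fix e assume a: "a = fa_diff (mon [GV (s e), GE e]) (mon [GE e])" and e: "e \<in> E1"
  show ?thesis
    by (intro fa_rep_diff_zero[OF a])
      (simp_all add: fa_rep_mon word_act_source_edge[OF e] del: word_act.simps)
next
  fix e assume a: "a = fa_diff (mon [GE e, GV (r e)]) (mon [GE e])" and e: "e \<in> E1"
  show ?thesis
    by (intro fa_rep_diff_zero[OF a])
      (simp_all add: fa_rep_mon word_act_edge_range[OF e] del: word_act.simps)
next
  fix e assume a: "a = fa_diff (mon [GV (r e), GS e]) (mon [GS e])"
  show ?thesis
    by (intro fa_rep_diff_zero[OF a])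
      (simp_all add: fa_rep_mon word_act_range_ghost del: word_act.simps)
next
  fix e assume a: "a = fa_diff (mon [GS e, GV (s e)]) (mon [GS e])" and e: "e \<in> E1"
  show ?thesis
    by (intro fa_rep_diff_zero[OF a])
      (simp_all add: fa_rep_mon word_act_ghost_source[OF e] del: word_act.simps)
next
  fix e d Y assume a: "a = fa_diff (mon [GS e, GE d]) (if e = d then mon [GV (r e)] else (\<lambda>_. 0))"
    and Yed: "Y \<in> sg_C E0 C" "e \<in> Y" "d \<in> Y"
  show ?thesis
    by (intro fa_rep_diff_zero[OF a])
      (simp_all add: fa_rep_mon fa_rep_zero word_act_ghost_edge[OF Yed] del: word_act.simps)
next
  fix v Y assume a: "a = fa_diff (mon [GV v]) (\<lambda>w. \<Sum>e\<in>Y. mon [GE e, GS e] w)"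
    and v: "nonsink E0 E1 s v" and Y: "Y \<in> S" "Y \<in> C v"
  have "finite Y" using Y S_finite by (auto simp: sg_Cfin_def)
  moreover have "v \<in> E0" using v by (simp add: nonsink_def)
  ultimately show ?thesis
    using word_act_Cuntz_Krieger[OF _ Y, symmetric]
    by (intro fa_rep_diff_zero[OF a])
      (simp_all add: finite_fa_supp_sum fa_rep_sum fa_rep_mon del: word_act.simps)
qed

lemma CL_ideal_act_zero:
  "a \<in> CL_ideal E0 E1 r s C S \<Longrightarrow> finite (fa_supp a) \<and> (\<forall>\<phi>. fa_rep a \<phi> = (\<lambda>x. 0 :: 'k::field))"
proof (induction rule: CL_ideal.induct)
  case (rel a)
  then show ?case by (rule CL_rels_act_zero)
next
  case (lmult a x)
  then show ?case
    using free_alg_finite_supp[of x] by (simp add: finite_fa_supp_mult fa_rep_mult fa_rep_zero_fun)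
next
  case (rmult a x)
  then show ?case
    using free_alg_finite_supp[of x] by (simp add: finite_fa_supp_mult fa_rep_mult)
qed (simp_all add: fa_rep_zero finite_fa_supp_add fa_rep_add finite_fa_supp_smult fa_rep_smult)

definition cl_rep :: "(('v, 'e) clgen list \<Rightarrow> 'k::field) set \<Rightarrow> (real \<Rightarrow> 'k) \<Rightarrow> real \<Rightarrow> 'k" where
  "cl_rep A = fa_rep (SOME a. a \<in> A)"

lemma cl_rep_class:
  fixes a :: "('v, 'e) clgen list \<Rightarrow> 'k::field"
  assumes a: "a \<in> free_alg E0 E1"
  shows "cl_rep (CL_class E0 E1 r s C S a) = fa_rep a"
proof -
  define b where "b = (SOME b. b \<in> CL_class E0 E1 r s C S a)"
  have "fa_diff a a = (\<lambda>_. 0)" by (simp add: fa_diff_def)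
  then have "a \<in> CL_class E0 E1 r s C S a"
    using a CL_ideal.zero by (simp add: CL_class_def CL_cong_def)
  then have "b \<in> CL_class E0 E1 r s C S a"
    unfolding b_def by (rule someI[where P = "\<lambda>b. b \<in> CL_class E0 E1 r s C S a"])
  then have b: "b \<in> free_alg E0 E1" "fa_diff a b \<in> CL_ideal E0 E1 r s C S"
    by (simp_all add: CL_class_def CL_cong_def)
  have "fa_rep a \<phi> = fa_rep b \<phi>" for \<phi> :: "real \<Rightarrow> 'k"
  proof -
    have "(\<lambda>x. fa_rep a \<phi> x - fa_rep b \<phi> x) = (\<lambda>x. 0)"
      using CL_ideal_act_zero[OF b(2)]
        fa_rep_diff[OF free_alg_finite_supp[OF a] free_alg_finite_supp[OF b(1)]]
      by metis
    then show ?thesis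
      by (simp add: fun_eq_iff)
  qed
  then show ?thesis
    unfolding cl_rep_def b_def[symmetric] by (intro ext) simp
qed

lemma gen_op_fun_module:
  assumes "g \<in> gens E0 E1" "\<phi> \<in> fun_module X"
  shows "gen_op g \<phi> \<in> fun_module X"
proof -
  have "r e \<in> E0" if "e \<in> E1" for e
    using that separated_graphD(2)[OF separated] by blast
  then show ?thesis
    using assms D_subset_X R_subset_X by (cases g) (auto simp: gens_def fun_module_def subset_iff)
qed

lemma fa_rep_fun_module:
  assumes "p \<in> free_alg E0 E1" "\<phi> \<in> fun_module X"
  shows "fa_rep p \<phi> \<in> fun_module X"
proof -
  have word: "word_act w \<phi> \<in> fun_module X" if "set w \<subseteq> gens E0 E1" for w
    using that by (induction w) (simp_all add: assms(2) gen_op_fun_module)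
  show ?thesis
    unfolding fun_module_def mem_Collect_eq
  proof (intro allI impI)
    fix x assume x: "x \<notin> X"
    have "word_act w \<phi> x = 0" if "w \<in> fa_supp p" for w
    proof -
      have "set w \<subseteq> gens E0 E1"
        using that assms(1) by (simp add: free_alg_iff)
      then show ?thesis
        using word[of w] x by (simp add: fun_module_def)
    qed
    then show "fa_rep p \<phi> x = 0"
      by (simp add: fa_rep_def)
  qed
qed

lemma cl_rep_hom: "CL_hom E0 E1 r s C S X (cl_rep :: (('v, 'e) clgen list \<Rightarrow> 'k::field) set \<Rightarrow> _)"
  unfolding CL_hom_def Let_def
proof (intro conjI ballI allI)
  fix A :: "(('v, 'e) clgen list \<Rightarrow> 'k) set"
  assume "A \<in> CL_algebra E0 E1 r s C S"
  then obtain a where a: "a \<in> free_alg E0 E1" "A = CL_class E0 E1 r s C S a"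
    unfolding CL_algebra_def CL_class_def by (rule quotientE)
  then show "is_endo (fun_module X) (cl_rep A)"
    using fa_rep_fun_module[OF a(1)]
    by (simp add: is_endo_def cl_rep_class fa_rep_add_fun fa_rep_smult_fun)
qed (simp_all add: cl_rep_class free_alg_add free_alg_smult free_alg_mult
    fa_rep_add fa_rep_smult fa_rep_mult free_alg_finite_supp)

lemma cl_rep_generator:
  "g \<in> gens E0 E1 \<Longrightarrow> cl_rep (CL_class E0 E1 r s C S (mon [g])) = (gen_op g :: _ \<Rightarrow> _ \<Rightarrow> 'k::field)"
  by (rule ext) (simp add: cl_rep_class free_alg_mon fa_rep_mon)

end

section \<open>Transport along injections\<close>

definition classes_independent ::
  "'v set \<Rightarrow> 'e set \<Rightarrow> ('e \<Rightarrow> 'v) \<Rightarrow> ('v \<Rightarrow> 'e set set) \<Rightarrow> 'e set set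
   \<Rightarrow> ('e \<Rightarrow> 'x set) \<Rightarrow> ('v \<Rightarrow> 'x set) \<Rightarrow> bool" where
  "classes_independent E0 E1 s C S R D \<longleftrightarrow> (\<forall>v. nonsink E0 E1 s v \<longrightarrow>
     (\<forall>Y1\<in>C v. \<forall>Y2\<in>C v. Y1 \<noteq> Y2 \<longrightarrow> (\<forall>e\<in>Y1. \<forall>e'\<in>Y2. R e \<inter> R e' \<noteq> {})) \<and>
     (\<forall>Y\<in>C v - S. (\<Union>e\<in>Y. R e) \<subset> D v) \<and>
     (\<forall>Y1\<in>C v - S. \<forall>Y2\<in>C v - S. Y1 \<noteq> Y2 \<longrightarrow> (\<Union>e\<in>Y1. R e) \<noteq> (\<Union>e\<in>Y2. R e)))"

lemma branching_system_image:
  assumes g: "inj g" and bs: "branching_system E0 E1 r s C S X R D f"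
  shows "branching_system E0 E1 r s C S UNIV (\<lambda>e. g ` R e) (\<lambda>v. g ` D v) (\<lambda>e. g \<circ> f e \<circ> inv g)"
proof -
  have "bij_betw (g \<circ> f e \<circ> inv g) (g ` D (r e)) (g ` R e)"
    if "bij_betw (f e) (D (r e)) (R e)" for e
  proof -
    have "bij_betw (inv g) (g ` D (r e)) (D (r e))"
      by (rule bij_betw_inv_into_subset[OF inj_on_imp_bij_betw[OF g]]) simp_all
    moreover have "bij_betw g (R e) (g ` R e)"
      by (rule inj_on_imp_bij_betw[OF inj_on_subset[OF g subset_UNIV]])
    ultimately show ?thesis
      using that by (simp add: o_assoc bij_betw_trans)
  qed
  then show ?thesis
    using bs unfolding branching_system_def
    by (simp add: image_Int[OF g, symmetric] image_UN[symmetric] image_mono)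
qed

lemma classes_independent_image:
  assumes g: "inj g" and ci: "classes_independent E0 E1 s C S R D"
  shows "classes_independent E0 E1 s C S (\<lambda>e. g ` R e) (\<lambda>v. g ` D v)"
proof -
  have "g ` A \<subset> g ` B \<longleftrightarrow> A \<subset> B" for A B
    by (simp add: psubset_eq inj_image_subset_iff[OF g] inj_image_eq_iff[OF g])
  then show ?thesis
    using ci g unfolding classes_independent_def
    by (simp add: image_Int[OF g, symmetric] image_UN[symmetric] inj_image_eq_iff)
qed

section \<open>A branching system on sequences\<close>

definition two_point_seq :: "nat \<Rightarrow> nat \<Rightarrow> nat \<Rightarrow> nat \<Rightarrow> nat \<Rightarrow> nat list" where
  "two_point_seq k1 a1 k2 a2 n = (replicate (Suc (max k1 k2) + n) 0)[k1 := a1, k2 := a2]"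

lemma nth_default_two_point_seq:
  "nth_default 0 (two_point_seq k1 a1 k2 a2 n) k2 = a2"
  "k1 \<noteq> k2 \<Longrightarrow> nth_default 0 (two_point_seq k1 a1 k2 a2 n) k1 = a1"
  by (simp_all add: two_point_seq_def nth_default_def del: replicate_Suc)

lemma length_two_point_seq: "length (two_point_seq k1 a1 k2 a2 n) = Suc (max k1 k2) + n"
  by (simp add: two_point_seq_def del: replicate_Suc)

locale countable_separated_graph =
  fixes E0 :: "'v set" and E1 :: "'e set" and r s :: "'e \<Rightarrow> 'v"
    and C :: "'v \<Rightarrow> 'e set set" and S :: "'e set set"
  assumes separated: "separated_graph E0 E1 r s C"
    and countable_E0: "countable E0" and countable_E1: "countable E1"
    and S_finite: "S \<subseteq> sg_Cfin E0 C"
begin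

definition class_of :: "'e \<Rightarrow> 'e set" where
  "class_of e = (THE Y. Y \<in> C (s e) \<and> e \<in> Y)"

definition class_coord :: "'e set \<Rightarrow> nat" where
  "class_coord Y = to_nat_on E1 (SOME e. e \<in> Y)"

definition edge_code :: "'e \<Rightarrow> nat" where
  "edge_code e =
     (if class_of e \<in> S then to_nat_on (class_of e) e else Suc (to_nat_on (class_of e) e))"

definition reduce_code :: "'e set \<Rightarrow> nat \<Rightarrow> nat" where
  "reduce_code Y m = (if Y \<in> S then m mod card Y else m)"

definition edge_seqs :: "'e \<Rightarrow> nat list set" where
  "edge_seqs e =
     {t. reduce_code (class_of e) (nth_default 0 t (class_coord (class_of e))) = edge_code e}"

definition seq_D :: "'v \<Rightarrow> (nat \<times> nat list) set" where
  "seq_D v = {to_nat_on E0 v} \<times> UNIV"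

definition seq_R :: "'e \<Rightarrow> (nat \<times> nat list) set" where
  "seq_R e = {to_nat_on E0 (s e)} \<times> edge_seqs e"

definition seq_f :: "'e \<Rightarrow> nat \<times> nat list \<Rightarrow> nat \<times> nat list" where
  "seq_f e = from_nat_into (seq_R e) \<circ> to_nat_on (seq_D (r e))"

lemma class_edge: "Y \<in> C v \<Longrightarrow> e \<in> Y \<Longrightarrow> e \<in> E1 \<and> s e = v"
  using separated_graph_class_edge[OF separated] .

lemma class_of_eq:
  assumes "Y \<in> C v" "e \<in> Y"
  shows "class_of e = Y"
  unfolding class_of_def class_edge[OF assms, THEN conjunct2]
  using assms
  by (intro the_equality) (auto dest: separated_graph_class_unique[OF separated _ assms(1)])

lemma finite_S_class: "Y \<in> S \<Longrightarrow> finite Y"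
  using S_finite by (auto simp: sg_Cfin_def)

lemma class_coord_inj:
  assumes Y1: "Y1 \<in> C v" and Y2: "Y2 \<in> C v" and eq: "class_coord Y1 = class_coord Y2"
  shows "Y1 = Y2"
proof -
  let ?e1 = "SOME e. e \<in> Y1" and ?e2 = "SOME e. e \<in> Y2"
  have e1: "?e1 \<in> Y1" and e2: "?e2 \<in> Y2"
    using separated_graph_class_nonempty[OF separated] Y1 Y2 by (simp_all add: some_in_eq)
  then have "?e1 = ?e2"
    using inj_onD[OF inj_on_to_nat_on[OF countable_E1] eq[unfolded class_coord_def]]
      class_edge[OF Y1 e1] class_edge[OF Y2 e2] by blast
  then show ?thesis
    using separated_graph_class_unique[OF separated Y1 Y2 e1] e2 by simp
qed

lemma edge_seqs_iff:
  "Y \<in> C v \<Longrightarrow> e \<in> Y \<Longrightarrow>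
   t \<in> edge_seqs e \<longleftrightarrow> reduce_code Y (nth_default 0 t (class_coord Y)) = edge_code e"
  by (simp add: edge_seqs_def class_of_eq)

lemma edge_code_inj:
  assumes Y: "Y \<in> C v" and "d \<in> Y" "e \<in> Y" "edge_code d = edge_code e"
  shows "d = e"
proof -
  have "to_nat_on Y d = to_nat_on Y e"
    using assms class_of_eq[OF Y] by (simp add: edge_code_def split: if_splits)
  moreover have "countable Y"
    using countable_subset[OF _ countable_E1] class_edge[OF Y] by blast
  ultimately show ?thesis
    using assms(2,3) by (blast dest: inj_onD[OF inj_on_to_nat_on])
qed

lemma edge_code_nonzero: "Y \<in> C v \<Longrightarrow> e \<in> Y \<Longrightarrow> Y \<notin> S \<Longrightarrow> edge_code e \<noteq> 0"
  by (simp add: edge_code_def class_of_eq)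

lemma edge_seqsI:
  assumes Y: "Y \<in> C v" and e: "e \<in> Y" and t: "nth_default 0 t (class_coord Y) = edge_code e"
  shows "t \<in> edge_seqs e"
proof -
  have "to_nat_on Y e < card Y" if "Y \<in> S"
    using to_nat_on_finite[OF finite_S_class[OF that]] e by (auto simp: bij_betw_def)
  then show ?thesis
    using t by (simp add: edge_seqs_iff[OF Y e] reduce_code_def edge_code_def class_of_eq[OF Y e])
qed

lemma infinite_edge_seqs:
  assumes "e \<in> E1"
  shows "infinite (edge_seqs e)"
proof -
  obtain Y where Y: "Y \<in> C (s e)" "e \<in> Y"
    using separated_graph_edge_class[OF separated assms] by blast
  let ?t = "two_point_seq (class_coord Y) (edge_code e) (class_coord Y) (edge_code e)"
  have "inj ?t"
    by (rule injI) (metis length_two_point_seq add_left_cancel)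
  moreover have "range ?t \<subseteq> edge_seqs e"
    using edge_seqsI[OF Y] nth_default_two_point_seq(1) by blast
  ultimately show ?thesis
    using range_inj_infinite finite_subset by blast
qed

lemma bij_betw_seq_f:
  assumes "e \<in> E1"
  shows "bij_betw (seq_f e) (seq_D (r e)) (seq_R e)"
proof -
  have D: "infinite (seq_D (r e))"
    by (simp add: seq_D_def finite_cartesian_product_iff infinite_UNIV_listI)
  have R: "infinite (seq_R e)"
    using infinite_edge_seqs[OF assms] by (auto simp: seq_R_def finite_cartesian_product_iff)
  show ?thesis
    unfolding seq_f_def
    by (rule bij_betw_trans[OF to_nat_on_infinite[OF _ D] bij_betw_from_nat_into[OF _ R]]) simp_all
qed

lemma seq_branching_system: "branching_system E0 E1 r s C S UNIV seq_R seq_D seq_f"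
  unfolding branching_system_def
proof (intro conjI ballI impI)
  fix Y d e assume Y: "Y \<in> sg_C E0 C" and "d \<in> Y" "e \<in> Y" "d \<noteq> e"
  from Y obtain v where v: "Y \<in> C v" by (auto simp: sg_C_def)
  show "seq_R d \<inter> seq_R e = {}"
    using edge_seqs_iff[OF v \<open>d \<in> Y\<close>] edge_seqs_iff[OF v \<open>e \<in> Y\<close>]
      edge_code_inj[OF v \<open>d \<in> Y\<close> \<open>e \<in> Y\<close>] \<open>d \<noteq> e\<close>
    by (auto simp: seq_R_def)
next
  fix v w assume "v \<in> E0" "w \<in> E0" "v \<noteq> w"
  then have "to_nat_on E0 v \<noteq> to_nat_on E0 w"
    by (meson countable_E0 inj_on_to_nat_on inj_onD)
  then show "seq_D v \<inter> seq_D w = {}"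
    by (auto simp: seq_D_def)
next
  fix v Y assume v: "v \<in> E0" and YS: "Y \<in> S" and Y: "Y \<in> C v"
  show "seq_D v = (\<Union>e\<in>Y. seq_R e)"
  proof
    show "(\<Union>e\<in>Y. seq_R e) \<subseteq> seq_D v"
      using class_edge[OF Y] by (auto simp: seq_R_def seq_D_def)
  next
    show "seq_D v \<subseteq> (\<Union>e\<in>Y. seq_R e)"
    proof
      fix p assume "p \<in> seq_D v"
      then obtain t where p: "p = (to_nat_on E0 v, t)"
        by (auto simp: seq_D_def)
      have fin: "finite Y" and "Y \<noteq> {}"
        using finite_S_class[OF YS] separated_graph_class_nonempty[OF separated Y] by simp_all
      then have "nth_default 0 t (class_coord Y) mod card Y \<in> to_nat_on Y ` Y"
        using to_nat_on_finite[OF fin] by (simp add: bij_betw_def card_gt_0_iff)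
      then obtain e where e: "e \<in> Y" "to_nat_on Y e = nth_default 0 t (class_coord Y) mod card Y"
        by auto
      then have "t \<in> edge_seqs e"
        using YS
        by (simp add: edge_seqs_iff[OF Y e(1)] reduce_code_def edge_code_def class_of_eq[OF Y])
      then show "p \<in> (\<Union>e\<in>Y. seq_R e)"
        using e class_edge[OF Y e(1)] p by (auto simp: seq_R_def)
    qed
  qed
next
  fix e assume "e \<in> E1"
  then show "bij_betw (seq_f e) (seq_D (r e)) (seq_R e)"
    by (rule bij_betw_seq_f)
qed (auto simp: seq_R_def seq_D_def)

lemma seq_classes_independent: "classes_independent E0 E1 s C S seq_R seq_D"
  unfolding classes_independent_def
proof (intro allI impI conjI ballI)
  fix v Y1 Y2 e e' assume Y1: "Y1 \<in> C v" and Y2: "Y2 \<in> C v" and "Y1 \<noteq> Y2"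
    and e: "e \<in> Y1" and e': "e' \<in> Y2"
  then have k: "class_coord Y1 \<noteq> class_coord Y2"
    using class_coord_inj by blast
  let ?t = "two_point_seq (class_coord Y1) (edge_code e) (class_coord Y2) (edge_code e') 0"
  have "?t \<in> edge_seqs e" "?t \<in> edge_seqs e'"
    using edge_seqsI[OF Y1 e] edge_seqsI[OF Y2 e'] nth_default_two_point_seq k
    by simp_all
  then have "(to_nat_on E0 v, ?t) \<in> seq_R e \<inter> seq_R e'"
    using class_edge[OF Y1 e] class_edge[OF Y2 e'] by (simp add: seq_R_def)
  then show "seq_R e \<inter> seq_R e' \<noteq> {}"
    by blast
next
  fix v Y assume "Y \<in> C v - S"
  then have Y: "Y \<in> C v" and YS: "Y \<notin> S" by simp_all
  have "(to_nat_on E0 v, []) \<notin> (\<Union>e\<in>Y. seq_R e)"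
    using edge_seqs_iff[OF Y] edge_code_nonzero[OF Y _ YS] YS
    by (auto simp: seq_R_def reduce_code_def)
  moreover have "(\<Union>e\<in>Y. seq_R e) \<subseteq> seq_D v"
    using class_edge[OF Y] by (auto simp: seq_R_def seq_D_def)
  ultimately show "(\<Union>e\<in>Y. seq_R e) \<subset> seq_D v"
    by (auto simp: seq_D_def)
next
  fix v Y1 Y2 assume "Y1 \<in> C v - S" "Y2 \<in> C v - S" and "Y1 \<noteq> Y2"
  then have Y1: "Y1 \<in> C v" and Y2: "Y2 \<in> C v" and Y2S: "Y2 \<notin> S"
    and k: "class_coord Y1 \<noteq> class_coord Y2"
    using class_coord_inj by auto
  obtain e where e: "e \<in> Y1"
    using separated_graph_class_nonempty[OF separated Y1] by blast
  let ?t = "two_point_seq (class_coord Y1) (edge_code e) (class_coord Y2) 0 0"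
  have "(to_nat_on E0 v, ?t) \<in> (\<Union>e\<in>Y1. seq_R e)"
    using e edge_seqsI[OF Y1 e] nth_default_two_point_seq(2)[OF k] class_edge[OF Y1 e]
    by (auto simp: seq_R_def)
  moreover have "(to_nat_on E0 v, ?t) \<notin> (\<Union>e\<in>Y2. seq_R e)"
    using edge_seqs_iff[OF Y2] edge_code_nonzero[OF Y2 _ Y2S] Y2S nth_default_two_point_seq(1)
    by (auto simp: seq_R_def reduce_code_def)
  ultimately show "(\<Union>e\<in>Y1. seq_R e) \<noteq> (\<Union>e\<in>Y2. seq_R e)"
    by blast
qed

end

theorem corollary3p4:
  fixes E0 :: "'v set" and E1 :: "'e set" and r s :: "'e \<Rightarrow> 'v"
    and C :: "'v \<Rightarrow> 'e set set" and S :: "'e set set"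
  assumes "separated_graph E0 E1 r s C"
    and "countable E0" and "countable E1"
    and "S \<subseteq> sg_Cfin E0 C"
  shows "\<exists>(X :: real set) R D f (\<pi> :: (('v, 'e) clgen list \<Rightarrow> 'k::field) set
             \<Rightarrow> (real \<Rightarrow> 'k) \<Rightarrow> (real \<Rightarrow> 'k)).
     is_interval X \<and> interior X \<noteq> {} \<and>
     branching_system E0 E1 r s C S X R D f \<and>
     (\<forall>v. nonsink E0 E1 s v \<longrightarrow>
        (\<forall>Y1\<in>C v. \<forall>Y2\<in>C v. Y1 \<noteq> Y2 \<longrightarrow> (\<forall>e\<in>Y1. \<forall>e'\<in>Y2. R e \<inter> R e' \<noteq> {})) \<and>
        (\<forall>Y\<in>C v - S. (\<Union>e\<in>Y. R e) \<subset> D v) \<and>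
        (\<forall>Y1\<in>C v - S. \<forall>Y2\<in>C v - S. Y1 \<noteq> Y2 \<longrightarrow> (\<Union>e\<in>Y1. R e) \<noteq> (\<Union>e\<in>Y2. R e))) \<and>
     CL_hom E0 E1 r s C S X \<pi> \<and>
     (\<forall>\<phi>\<in>fun_module X.
        (\<forall>v\<in>E0. \<pi> (CL_class E0 E1 r s C S (mon [GV v])) \<phi> =
                   (\<lambda>x. if x \<in> D v then \<phi> x else 0)) \<and>
        (\<forall>e\<in>E1. \<pi> (CL_class E0 E1 r s C S (mon [GE e])) \<phi> =
                   (\<lambda>x. if x \<in> R e then \<phi> (the_inv_into (D (r e)) (f e) x) else 0)) \<and>
        (\<forall>e\<in>E1. \<pi> (CL_class E0 E1 r s C S (mon [GS e])) \<phi> =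
                   (\<lambda>x. if x \<in> D (r e) then \<phi> (f e x) else 0)))"
proof -
  interpret countable_separated_graph E0 E1 r s C S
    using assms by unfold_locales
  define g :: "nat \<times> nat list \<Rightarrow> real" where "g = real \<circ> to_nat"
  have g: "inj g"
    unfolding g_def by (rule injI) (simp add: injD[OF inj_to_nat])
  define R where "R = (\<lambda>e. g ` seq_R e)"
  define D where "D = (\<lambda>v. g ` seq_D v)"
  define f where "f = (\<lambda>e. g \<circ> seq_f e \<circ> inv g)"
  have branching: "branching_system E0 E1 r s C S UNIV R D f"
    unfolding R_def D_def f_def by (rule branching_system_image[OF g seq_branching_system])
  have independent: "classes_independent E0 E1 s C S R D"
    unfolding R_def D_def by (rule classes_independent_image[OF g seq_classes_independent])
  interpret rep: branching_rep E0 E1 r s C S UNIV D R f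
    using assms(1,4) branching by unfold_locales
  show ?thesis
    using branching independent rep.cl_rep_hom
    unfolding classes_independent_def
    by (intro exI[of _ UNIV] exI[of _ R] exI[of _ D] exI[of _ f] exI[of _ rep.cl_rep])
      (simp add: rep.cl_rep_generator gens_def)
qed

end
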